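(* For every integer $m\ge1$, the following identity holds in the field $\mathbb Q(q)(w,z_1,\dots,z_m)$ of rational functions (with $q$ an indeterminate): $$\sum_{\sigma\in S_m}\sum_{r=0}^{m}\begin{bmatrix} m\\ r\end{bmatrix}\prod_{k=1}^{r}\big(w-q^{m-1}z_{\sigma(k)}\big)\prod_{k=r+1}^{m}\big(z_{\sigma(k)}-q^{m-1}w\big)\prod_{1\le i<j\le m}\frac{z_{\sigma(i)}-q^{2}z_{\sigma(j)}}{z_{\sigma(i)}-z_{\sigma(j)}}=0.$$
   Context: $[k]=\frac{q^k-q^{-k}}{q-q^{-1}}$, $[k]!=[1][2]\cdots[k]$ with $[0]!=1$, and $\begin{bmatrix} m\\ r\end{bmatrix}=\frac{[m]!}{[r]![m-r]!}$ (a Laurent polynomial in $q$). $S_m$ is the symmetric group on $\{1,\dots,m\}$, acting by permuting the indices of $z_1,\dots,z_m$. *)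

theory Defs
  imports Complex_Main "HOL-Combinatorics.Permutations"
begin

definition qint :: "complex \<Rightarrow> nat \<Rightarrow> complex" where
  "qint q k = (q ^ k - inverse q ^ k) / (q - inverse q)"

definition qfact :: "complex \<Rightarrow> nat \<Rightarrow> complex" where
  "qfact q k = (\<Prod>i\<in>{1..k}. qint q i)"

definition qbinom :: "complex \<Rightarrow> nat \<Rightarrow> nat \<Rightarrow> complex" where
  "qbinom q m r = qfact q m / (qfact q r * qfact q (m - r))"

end

theory Submission
  imports Defs "HOL-Library.Disjoint_Sets"
begin

text \<open>
  The weight W(y) = \<Prod>i<j. (y i - t y j) / (y i - y j), t = q^2, satisfies for the adjacent
  transposition \<tau> = (i i+1) the exchange relation
  (y (i+1) - t y i) W(y) + (y i - t y (i+1)) W(y \<circ> \<tau>) = 0.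
  Summed over S_m it moves a variable of a monomial one index down at the cost of a factor t,
  so the symmetrization of \<Prod>k\<in>S. y k is t^(\<Sum>S) times a number depending only on |S|.
  The summand is multilinear in y; hence its symmetrization vanishes once, for every degree s,
  the coefficients of the degree-s monomials weighted by t^(\<Sum>S) add up to 0, i.e. once the
  summand vanishes identically on the geometric progressions y k = x t^k.  On such a progression
  the sum over r collapses, by a Cauchy-type Gaussian binomial identity, to
  \<Prod>j<m. (y - y t^j) with y = q^(m+1) x, which vanishes because of the factor j = 0.
\<close>

definition hl_weight :: "nat \<Rightarrow> 'a::field \<Rightarrow> (nat \<Rightarrow> 'a) \<Rightarrow> 'a" where
  "hl_weight m t y = (\<Prod>(i, j)\<in>{(i, j). 1 \<le> i \<and> i < j \<and> j \<le> m}. (y i - t * y j) / (y i - y j))"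

definition hl_symmetrize :: "nat \<Rightarrow> 'a::field \<Rightarrow> (nat \<Rightarrow> 'a) \<Rightarrow> ((nat \<Rightarrow> 'a) \<Rightarrow> 'a) \<Rightarrow> 'a" where
  "hl_symmetrize m t z f = (\<Sum>\<sigma>\<in>{\<sigma>. \<sigma> permutes {1..m}}. f (z \<circ> \<sigma>) * hl_weight m t (z \<circ> \<sigma>))"

text \<open>No distinctness of the values y k is needed: if y i = y (Suc i), both weights are 0
  because x / 0 = 0.\<close>

lemma hl_weight_transpose:
  fixes y :: "nat \<Rightarrow> 'a::field"
  assumes "1 \<le> i" and "i < m"
  shows "(y (Suc i) - t * y i) * hl_weight m t y
       + (y i - t * y (Suc i)) * hl_weight m t (y \<circ> transpose i (Suc i)) = 0"
proof -
  let ?\<tau> = "transpose i (Suc i)"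
  define P where "P = {(i, j). 1 \<le> i \<and> i < j \<and> j \<le> (m::nat)} - {(i, Suc i)}"
  define f where "f y = (\<lambda>(i, j). (y i - t * y j) / (y i - y j))" for y :: "nat \<Rightarrow> 'a"
  have pairs: "{(i, j). 1 \<le> i \<and> i < j \<and> j \<le> m} = insert (i, Suc i) P" "(i, Suc i) \<notin> P"
    using assms by (auto simp: P_def)
  have "finite P"
    by (rule finite_subset[of _ "{1..m} \<times> {1..m}"]) (auto simp: P_def)
  \<comment> \<open>the transposition permutes all other pairs among themselves\<close>
  have rest: "prod (f (y \<circ> ?\<tau>)) P = prod (f y) P"
    by (rule prod.reindex_bij_witness[where i = "\<lambda>(a, b). (?\<tau> a, ?\<tau> b)" and j = "\<lambda>(a, b). (?\<tau> a, ?\<tau> b)"])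
      (use assms in \<open>auto simp: P_def f_def transpose_def split: if_splits\<close>)
  have "hl_weight m t y = (y i - t * y (Suc i)) / (y i - y (Suc i)) * prod (f y) P"
    "hl_weight m t (y \<circ> ?\<tau>) = (y (Suc i) - t * y i) / (y (Suc i) - y i) * prod (f y) P"
    using \<open>finite P\<close> pairs(2) rest unfolding hl_weight_def pairs(1) f_def by simp_all
  then show ?thesis
    by (simp add: minus_diff_eq[symmetric, of "y i"] del: minus_diff_eq)
qed

lemma hl_symmetrize_exchange:
  fixes G :: "(nat \<Rightarrow> 'a::field) \<Rightarrow> 'a"
  assumes "1 \<le> i" and "i < m" and G: "\<And>y. G (y \<circ> transpose i (Suc i)) = G y"
  shows "hl_symmetrize m t z (\<lambda>y. G y * y (Suc i)) = t * hl_symmetrize m t z (\<lambda>y. G y * y i)"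
proof -
  let ?\<tau> = "transpose i (Suc i)"
  define E where "E \<sigma> = G (z \<circ> \<sigma>) * ((z \<circ> \<sigma>) (Suc i) - t * (z \<circ> \<sigma>) i) * hl_weight m t (z \<circ> \<sigma>)" for \<sigma>
  have "?\<tau> permutes {1..m}"
    using assms(1,2) by (intro permutes_swap_id) auto
  have "E (\<sigma> \<circ> ?\<tau>) + E \<sigma> = 0" for \<sigma>
  proof -
    have "E (\<sigma> \<circ> ?\<tau>) + E \<sigma> = G (z \<circ> \<sigma>)
        * (((z \<circ> \<sigma>) (Suc i) - t * (z \<circ> \<sigma>) i) * hl_weight m t (z \<circ> \<sigma>)
          + ((z \<circ> \<sigma>) i - t * (z \<circ> \<sigma>) (Suc i)) * hl_weight m t (z \<circ> \<sigma> \<circ> ?\<tau>))"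
      using G[of "z \<circ> \<sigma>"] by (simp add: E_def comp_assoc algebra_simps)
    also have "\<dots> = 0"
      by (simp only: hl_weight_transpose[OF assms(1,2)] mult_zero_right)
    finally show ?thesis .
  qed
  moreover have "\<sigma> \<circ> ?\<tau> \<noteq> \<sigma>" if "\<sigma> permutes {1..m}" for \<sigma>
  proof
    assume "\<sigma> \<circ> ?\<tau> = \<sigma>"
    then have "\<sigma> (Suc i) = \<sigma> i" by (metis comp_apply transpose_apply_first)
    then have "Suc i = i" by (rule injD[OF permutes_inj[OF that]])
    then show False by simp
  qed
  ultimately have "sum E {\<sigma>. \<sigma> permutes {1..m}} = 0"
    using \<open>?\<tau> permutes {1..m}\<close>
    by (intro sum_involution_eq_0[where h = "\<lambda>\<sigma>. \<sigma> \<circ> ?\<tau>"]) (auto simp: permutes_compose comp_assoc)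
  moreover have "hl_symmetrize m t z (\<lambda>y. G y * y (Suc i)) - t * hl_symmetrize m t z (\<lambda>y. G y * y i)
      = sum E {\<sigma>. \<sigma> permutes {1..m}}"
    unfolding hl_symmetrize_def sum_distrib_left E_def
    by (simp add: algebra_simps flip: sum_subtractf)
  ultimately show ?thesis by simp
qed

lemma initial_segment_or_gap:
  assumes "finite S" and "0 \<notin> S"
  shows "S = {1..card S} \<or> (\<exists>i\<ge>1. i \<notin> S \<and> Suc i \<in> S)"
proof (rule disjCI)
  assume no_gap: "\<not> (\<exists>i\<ge>1. i \<notin> S \<and> Suc i \<in> S)"
  have absent_above: "j \<notin> S" if "1 \<le> i" "i \<le> j" "i \<notin> S" for i j
    using that(2) by (induction j rule: dec_induct) (use that no_gap in \<open>meson le_trans\<close>)+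
  have "{1..card S} \<subseteq> S"
  proof
    fix k assume k: "k \<in> {1..card S}"
    show "k \<in> S"
    proof (rule ccontr)
      assume "k \<notin> S"
      have "S \<subseteq> {1..k - 1}"
      proof
        fix x assume "x \<in> S"
        with absent_above[of k x] k \<open>k \<notin> S\<close> have "x < k" by (meson atLeastAtMost_iff leI)
        moreover from \<open>x \<in> S\<close> assms(2) have "x \<noteq> 0" by metis
        ultimately show "x \<in> {1..k - 1}" by simp
      qed
      from card_mono[OF finite_atLeastAtMost this] k show False by auto
    qed
  qed
  from card_subset_eq[OF assms(1) this] show "S = {1..card S}" by simp
qed

lemma hl_symmetrize_monomial:
  fixes t :: "'a::field"
  assumes "S \<subseteq> {1..m}"
  shows "t ^ \<Sum>{1..card S} * hl_symmetrize m t z (\<lambda>y. \<Prod>k\<in>S. y k)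
       = t ^ \<Sum>S * hl_symmetrize m t z (\<lambda>y. \<Prod>k\<in>{1..card S}. y k)"
  using assms
proof (induction "\<Sum>S" arbitrary: S rule: less_induct)
  case less
  have "finite S" "0 \<notin> S"
    using less.prems by (auto intro: finite_subset)
  from initial_segment_or_gap[OF this] show ?case
  proof
    assume "S = {1..card S}"
    then show ?thesis by simp
  next
    assume "\<exists>i\<ge>1. i \<notin> S \<and> Suc i \<in> S"
    then obtain i where i: "1 \<le> i" "i \<notin> S" "Suc i \<in> S" by blast
    from i(3) less.prems have "i < m" by auto
    define S0 where "S0 = S - {Suc i}"
    define S' where "S' = insert i S0"
    have "i \<notin> S0" "Suc i \<notin> S0" "finite S0"
      using i \<open>finite S\<close> by (auto simp: S0_def)
    have S: "S = insert (Suc i) S0"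
      using i by (auto simp: S0_def)
    have "card S' = card S" "\<Sum>S = Suc (\<Sum>S')"
      using \<open>i \<notin> S0\<close> \<open>Suc i \<notin> S0\<close> \<open>finite S0\<close> by (simp_all add: S S'_def)
    have "S' \<subseteq> {1..m}"
      using i(1) \<open>i < m\<close> less.prems by (auto simp: S'_def S0_def)
    have "(\<Prod>k\<in>S0. (y \<circ> transpose i (Suc i)) k) = (\<Prod>k\<in>S0. y k)" for y :: "nat \<Rightarrow> 'a"
      using \<open>i \<notin> S0\<close> \<open>Suc i \<notin> S0\<close> by (intro prod.cong) (auto simp: transpose_def)
    then have "hl_symmetrize m t z (\<lambda>y. (\<Prod>k\<in>S0. y k) * y (Suc i))
        = t * hl_symmetrize m t z (\<lambda>y. (\<Prod>k\<in>S0. y k) * y i)"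
      by (rule hl_symmetrize_exchange[OF i(1) \<open>i < m\<close>])
    moreover have "(\<lambda>y :: nat \<Rightarrow> 'a. \<Prod>k\<in>S. y k) = (\<lambda>y. (\<Prod>k\<in>S0. y k) * y (Suc i))"
      "(\<lambda>y :: nat \<Rightarrow> 'a. \<Prod>k\<in>S'. y k) = (\<lambda>y. (\<Prod>k\<in>S0. y k) * y i)"
      using \<open>i \<notin> S0\<close> \<open>Suc i \<notin> S0\<close> \<open>finite S0\<close> by (simp_all add: S S'_def mult.commute)
    ultimately have exchange:
      "hl_symmetrize m t z (\<lambda>y. \<Prod>k\<in>S. y k) = t * hl_symmetrize m t z (\<lambda>y. \<Prod>k\<in>S'. y k)"
      by (simp only:)
    have "t ^ \<Sum>{1..card S} * hl_symmetrize m t z (\<lambda>y. \<Prod>k\<in>S. y k)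
        = t * (t ^ \<Sum>{1..card S'} * hl_symmetrize m t z (\<lambda>y. \<Prod>k\<in>S'. y k))"
      by (simp add: exchange \<open>card S' = card S\<close> mult_ac)
    also have "\<dots> = t * (t ^ \<Sum>S' * hl_symmetrize m t z (\<lambda>y. \<Prod>k\<in>{1..card S'}. y k))"
      using less.hyps[of S'] \<open>\<Sum>S = Suc (\<Sum>S')\<close> \<open>S' \<subseteq> {1..m}\<close> by simp
    also have "\<dots> = t ^ \<Sum>S * hl_symmetrize m t z (\<lambda>y. \<Prod>k\<in>{1..card S}. y k)"
      by (simp add: \<open>card S' = card S\<close> \<open>\<Sum>S = Suc (\<Sum>S')\<close>)
    finally show ?thesis .
  qed
qed

lemma sum_Pow_group_card:
  fixes g :: "'b set \<Rightarrow> 'a::comm_semiring_0"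
  assumes "finite A"
  shows "(\<Sum>S\<in>Pow A. g S * h (card S)) = (\<Sum>s\<le>card A. h s * (\<Sum>S | S \<in> Pow A \<and> card S = s. g S))"
proof -
  have "(\<Sum>S\<in>Pow A. g S * h (card S)) = (\<Sum>s\<le>card A. \<Sum>S | S \<in> Pow A \<and> card S = s. g S * h (card S))"
    using assms by (intro sum.group[symmetric]) (auto intro: card_mono)
  also have "\<dots> = (\<Sum>s\<le>card A. h s * (\<Sum>S | S \<in> Pow A \<and> card S = s. g S))"
    by (intro sum.cong refl) (simp add: sum_distrib_left mult.commute)
  finally show ?thesis .
qed

definition multilinear_polyfun :: "nat set \<Rightarrow> ((nat \<Rightarrow> 'a::comm_semiring_1) \<Rightarrow> 'a) \<Rightarrow> bool" where
  "multilinear_polyfun A F \<longleftrightarrow> (\<exists>c. \<forall>y. F y = (\<Sum>S\<in>Pow A. c S * (\<Prod>k\<in>S. y k)))"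

lemma multilinear_polyfun_prod:
  assumes "finite A"
  shows "multilinear_polyfun A (\<lambda>y. \<Prod>k\<in>A. u k + v k * y k)"
proof -
  have "(\<Prod>k\<in>A. u k + v k * y k) = (\<Sum>S\<in>Pow A. ((\<Prod>k\<in>S. v k) * (\<Prod>k\<in>A - S. u k)) * (\<Prod>k\<in>S. y k))" for y
    using prod_add[OF assms, of "\<lambda>k. v k * y k" u] by (simp add: add.commute prod.distrib mult_ac)
  then show ?thesis
    unfolding multilinear_polyfun_def by (intro exI[of _ "\<lambda>S. (\<Prod>k\<in>S. v k) * (\<Prod>k\<in>A - S. u k)"] allI)
qed

lemma multilinear_polyfun_sum:
  assumes "\<And>r. r \<in> I \<Longrightarrow> multilinear_polyfun A (F r)"
  shows "multilinear_polyfun A (\<lambda>y. \<Sum>r\<in>I. a r * F r y)"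
proof -
  from assms obtain c where c: "\<And>r y. r \<in> I \<Longrightarrow> F r y = (\<Sum>S\<in>Pow A. c r S * (\<Prod>k\<in>S. y k))"
    unfolding multilinear_polyfun_def by metis
  have "(\<Sum>r\<in>I. a r * F r y) = (\<Sum>S\<in>Pow A. (\<Sum>r\<in>I. a r * c r S) * (\<Prod>k\<in>S. y k))" for y
    by (simp add: c sum_distrib_left sum_distrib_right mult_ac sum.swap[of _ I])
  then show ?thesis
    unfolding multilinear_polyfun_def by (intro exI[of _ "\<lambda>S. \<Sum>r\<in>I. a r * c r S"] allI)
qed

lemma multilinear_polyfun_split_prod:
  fixes a :: "nat \<Rightarrow> 'a::comm_ring_1"
  shows "multilinear_polyfun {1..m}
     (\<lambda>y. \<Sum>r=0..m. a r * (\<Prod>k\<in>{1..r}. w - c * y k) * (\<Prod>k\<in>{r+1..m}. y k - c * w))"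
proof -
  define u where "u r k = (if k \<le> r then w else - (c * w))" for r k :: nat
  define v where "v r k = (if k \<le> r then - c else 1)" for r k :: nat
  have "(\<Prod>k\<in>{1..r}. w - c * y k) * (\<Prod>k\<in>{r+1..m}. y k - c * w) = (\<Prod>k\<in>{1..m}. u r k + v r k * y k)"
    if "r \<le> m" for r y
  proof -
    have "(\<Prod>k\<in>{1..m}. u r k + v r k * y k)
        = (\<Prod>k\<in>{1..r}. u r k + v r k * y k) * (\<Prod>k\<in>{r+1..m}. u r k + v r k * y k)"
      using prod.ub_add_nat[of 1 r "\<lambda>k. u r k + v r k * y k" "m - r"] that by simp
    also have "\<dots> = (\<Prod>k\<in>{1..r}. w - c * y k) * (\<Prod>k\<in>{r+1..m}. y k - c * w)"
      by (intro arg_cong2[where f = "(*)"] prod.cong) (auto simp: u_def v_def)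
    finally show ?thesis ..
  qed
  then have "(\<lambda>y. \<Sum>r=0..m. a r * (\<Prod>k\<in>{1..r}. w - c * y k) * (\<Prod>k\<in>{r+1..m}. y k - c * w))
      = (\<lambda>y. \<Sum>r=0..m. a r * (\<Prod>k\<in>{1..m}. u r k + v r k * y k))"
    by (auto simp: fun_eq_iff mult.assoc intro!: sum.cong)
  then show ?thesis
    by (simp add: multilinear_polyfun_sum multilinear_polyfun_prod)
qed

lemma hl_symmetrize_linear:
  "hl_symmetrize m t z (\<lambda>y. \<Sum>i\<in>I. c i * f i y) = (\<Sum>i\<in>I. c i * hl_symmetrize m t z (f i))"
  unfolding hl_symmetrize_def sum_distrib_left sum_distrib_right
  by (subst sum.swap) (simp add: mult_ac)

lemma hl_symmetrize_multilinear_eq_0: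
  fixes t :: "'a::real_normed_field"
  assumes "t \<noteq> 0" and "multilinear_polyfun {1..m} F" and "\<And>x. F (\<lambda>k. x * t ^ k) = 0"
  shows "hl_symmetrize m t z F = 0"
proof -
  from assms(2) obtain c where F: "\<And>y. F y = (\<Sum>S\<in>Pow {1..m}. c S * (\<Prod>k\<in>S. y k))"
    unfolding multilinear_polyfun_def by blast
  define e where "e s = (\<Sum>S | S \<in> Pow {1..m} \<and> card S = s. c S * t ^ \<Sum>S)" for s
  have "(\<Sum>s\<le>m. e s * x ^ s) = 0" for x
  proof -
    have "(\<Prod>k\<in>S. x * t ^ k) = t ^ \<Sum>S * x ^ card S" for S
      by (simp add: prod.distrib power_sum mult.commute)
    then have "F (\<lambda>k. x * t ^ k) = (\<Sum>S\<in>Pow {1..m}. (c S * t ^ \<Sum>S) * x ^ card S)"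
      by (simp add: F mult.assoc)
    also have "\<dots> = (\<Sum>s\<le>m. e s * x ^ s)"
      using sum_Pow_group_card[of "{1..m}" "\<lambda>S. c S * t ^ \<Sum>S" "\<lambda>s. x ^ s"] by (simp add: e_def mult.commute)
    finally show ?thesis using assms(3) by simp
  qed
  then have e: "e s = 0" if "s \<le> m" for s
    using polyfun_eq_0 that by blast
  define \<mu> where "\<mu> s = hl_symmetrize m t z (\<lambda>y. \<Prod>k\<in>{1..s}. y k) / t ^ \<Sum>{1..s}" for s
  have "hl_symmetrize m t z F = (\<Sum>S\<in>Pow {1..m}. c S * hl_symmetrize m t z (\<lambda>y. \<Prod>k\<in>S. y k))"
    unfolding F hl_symmetrize_linear ..
  also have "\<dots> = (\<Sum>S\<in>Pow {1..m}. (c S * t ^ \<Sum>S) * \<mu> (card S))"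
  proof (intro sum.cong refl)
    fix S assume "S \<in> Pow {1..m}"
    then show "c S * hl_symmetrize m t z (\<lambda>y. \<Prod>k\<in>S. y k) = (c S * t ^ \<Sum>S) * \<mu> (card S)"
      using hl_symmetrize_monomial[of S m t z] assms(1) by (simp add: \<mu>_def field_simps)
  qed
  also have "\<dots> = (\<Sum>s\<le>m. \<mu> s * e s)"
    using sum_Pow_group_card[of "{1..m}" "\<lambda>S. c S * t ^ \<Sum>S" \<mu>] by (simp add: e_def)
  also have "\<dots> = 0"
    by (simp add: e)
  finally show ?thesis .
qed

definition gauss_int :: "'a::comm_semiring_1 \<Rightarrow> nat \<Rightarrow> 'a" where
  "gauss_int p k = (\<Sum>j<k. p ^ j)"

definition gauss_fact :: "'a::comm_semiring_1 \<Rightarrow> nat \<Rightarrow> 'a" where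
  "gauss_fact p n = (\<Prod>i\<in>{1..n}. gauss_int p i)"

fun gauss_binomial :: "'a::comm_semiring_1 \<Rightarrow> nat \<Rightarrow> nat \<Rightarrow> 'a" where
  "gauss_binomial p n 0 = 1"
| "gauss_binomial p 0 (Suc k) = 0"
| "gauss_binomial p (Suc n) (Suc k) = gauss_binomial p n (Suc k) + p ^ (n - k) * gauss_binomial p n k"

lemma gauss_binomial_eq_0: "n < k \<Longrightarrow> gauss_binomial p n k = 0"
  by (induction p n k rule: gauss_binomial.induct) auto

lemma gauss_int_0 [simp]: "gauss_int p 0 = 0"
  by (simp add: gauss_int_def)

lemma gauss_int_add: "gauss_int p (d + k) = gauss_int p d + p ^ d * gauss_int p k"
  unfolding gauss_int_def
  by (induction k) (simp_all add: algebra_simps power_add)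

lemma gauss_fact_0 [simp]: "gauss_fact p 0 = 1"
  by (simp add: gauss_fact_def)

lemma gauss_fact_Suc: "gauss_fact p (Suc n) = gauss_fact p n * gauss_int p (Suc n)"
  by (simp add: gauss_fact_def atLeastAtMostSuc_conv mult.commute)

lemma gauss_binomial_gauss_fact:
  "k \<le> n \<Longrightarrow> gauss_binomial p n k * gauss_fact p k * gauss_fact p (n - k) = gauss_fact p n"
proof (induction n arbitrary: k)
  case 0
  then show ?case by simp
next
  case (Suc n)
  show ?case
  proof (cases k)
    case 0
    then show ?thesis by simp
  next
    case (Suc k')
    with Suc.prems have "k' \<le> n" by simp
    \<comment> \<open>for k' = n both sides vanish, as gauss_int p 0 = 0\<close>
    have right: "gauss_binomial p n (Suc k') * gauss_fact p (Suc k') * gauss_fact p (n - k')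
        = gauss_fact p n * gauss_int p (n - k')"
    proof (cases "k' = n")
      case True
      then show ?thesis by (simp add: gauss_binomial_eq_0)
    next
      case False
      with \<open>k' \<le> n\<close> have "n - k' = Suc (n - Suc k')" by simp
      then have "gauss_binomial p n (Suc k') * gauss_fact p (Suc k') * gauss_fact p (n - k')
          = gauss_binomial p n (Suc k') * gauss_fact p (Suc k') * gauss_fact p (n - Suc k')
            * gauss_int p (n - k')"
        by (simp add: gauss_fact_Suc mult_ac)
      with Suc.IH[of "Suc k'"] False \<open>k' \<le> n\<close> show ?thesis by simp
    qed
    have "gauss_binomial p (Suc n) k * gauss_fact p k * gauss_fact p (Suc n - k)
        = gauss_binomial p n (Suc k') * gauss_fact p (Suc k') * gauss_fact p (n - k')
          + p ^ (n - k') * (gauss_binomial p n k' * gauss_fact p k' * gauss_fact p (n - k'))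
            * gauss_int p (Suc k')"
      using \<open>k = Suc k'\<close> by (simp add: gauss_fact_Suc algebra_simps)
    also have "\<dots> = gauss_fact p n * (gauss_int p (n - k') + p ^ (n - k') * gauss_int p (Suc k'))"
      using right Suc.IH[OF \<open>k' \<le> n\<close>] by (simp add: algebra_simps)
    also have "\<dots> = gauss_fact p (Suc n)"
      using gauss_int_add[of p "n - k'" "Suc k'"] \<open>k' \<le> n\<close> by (simp add: gauss_fact_Suc)
    finally show ?thesis .
  qed
qed

lemma gauss_binomial_Suc:
  "gauss_binomial p (Suc n) k
     = gauss_binomial p n k + (if k = 0 then 0 else p ^ (Suc n - k) * gauss_binomial p n (k - 1))"
  by (cases k) simp_all

lemma gauss_binomial_sum_prod:
  fixes p u a y :: "'a::comm_ring_1"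
  shows "(\<Sum>k\<le>n. gauss_binomial p n k * (\<Prod>j<k. u - a * p ^ j) * (\<Prod>j<n - k. y - u * p ^ j))
       = (\<Prod>j<n. y - a * p ^ j)"
proof (induction n)
  case 0
  then show ?case by simp
next
  case (Suc n)
  define A where "A k = (\<Prod>j<k. u - a * p ^ j)" for k
  define B where "B k = (\<Prod>j<k. y - u * p ^ j)" for k
  have combine: "A k * B (n - k) * (y - u * p ^ (n - k)) + p ^ (n - k) * A (Suc k) * B (n - k)
      = A k * B (n - k) * (y - a * p ^ n)" if "k \<le> n" for k
  proof -
    from that obtain d where "n = k + d" using le_Suc_ex by blast
    then show ?thesis by (simp add: A_def lessThan_Suc power_add algebra_simps)
  qed
  have "(\<Sum>k\<le>Suc n. gauss_binomial p (Suc n) k * A k * B (Suc n - k))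
      = (\<Sum>k\<le>Suc n. gauss_binomial p n k * A k * B (Suc n - k))
        + (\<Sum>k\<le>Suc n. (if k = 0 then 0 else p ^ (Suc n - k) * gauss_binomial p n (k - 1))
            * A k * B (Suc n - k))"
    by (simp add: gauss_binomial_Suc sum.distrib algebra_simps)
  also have "(\<Sum>k\<le>Suc n. gauss_binomial p n k * A k * B (Suc n - k))
      = (\<Sum>k\<le>n. gauss_binomial p n k * (A k * B (n - k) * (y - u * p ^ (n - k))))"
    by (simp add: gauss_binomial_eq_0 B_def Suc_diff_le lessThan_Suc mult_ac)
  also have "(\<Sum>k\<le>Suc n. (if k = 0 then 0 else p ^ (Suc n - k) * gauss_binomial p n (k - 1))
            * A k * B (Suc n - k))
      = (\<Sum>k\<le>n. gauss_binomial p n k * (p ^ (n - k) * A (Suc k) * B (n - k)))"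
    by (subst sum.atMost_Suc_shift) (simp add: mult_ac)
  also have "(\<Sum>k\<le>n. gauss_binomial p n k * (A k * B (n - k) * (y - u * p ^ (n - k))))
        + (\<Sum>k\<le>n. gauss_binomial p n k * (p ^ (n - k) * A (Suc k) * B (n - k)))
      = (\<Sum>k\<le>n. gauss_binomial p n k * (A k * B (n - k) * (y - a * p ^ n)))"
    by (simp add: combine flip: sum.distrib distrib_left)
  also have "\<dots> = (\<Sum>k\<le>n. gauss_binomial p n k * A k * B (n - k)) * (y - a * p ^ n)"
    by (simp add: sum_distrib_right mult.assoc)
  also have "\<dots> = (\<Prod>j<Suc n. y - a * p ^ j)"
    using Suc.IH by (simp add: A_def B_def)
  finally show ?case by (simp add: A_def B_def)
qed

lemma qint_gauss_int:
  assumes "q \<noteq> 0" and "q ^ 2 \<noteq> 1"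
  shows "q ^ (k - 1) * qint q k = gauss_int (q ^ 2) k"
proof (cases k)
  case 0
  then show ?thesis by (simp add: qint_def gauss_int_def)
next
  case (Suc k')
  have "q ^ 2 - 1 \<noteq> 0" using assms(2) by simp
  have "gauss_int (q ^ 2) k * (q ^ 2 - 1) = (q ^ 2) ^ k - 1"
    using one_diff_power_eq[of "q ^ 2" k] by (simp add: gauss_int_def algebra_simps)
  moreover have "q ^ (k - 1) * qint q k * (q ^ 2 - 1) = (q ^ 2) ^ k - 1"
    using assms \<open>q ^ 2 - 1 \<noteq> 0\<close> Suc
    by (simp add: qint_def field_simps power2_eq_square flip: power_mult)
  ultimately show ?thesis using \<open>q ^ 2 - 1 \<noteq> 0\<close> by (metis mult_cancel_right)
qed

lemma choose_two_add: "(a + b) choose 2 = (a choose 2) + (b choose 2) + a * b"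
  by (induction b) (simp_all add: numeral_2_eq_2)

lemma qfact_Suc: "qfact q (Suc n) = qfact q n * qint q (Suc n)"
  by (simp add: qfact_def atLeastAtMostSuc_conv mult.commute)

lemma qfact_gauss_fact:
  assumes "q \<noteq> 0" and "q ^ 2 \<noteq> 1"
  shows "q ^ (n choose 2) * qfact q n = gauss_fact (q ^ 2) n"
proof (induction n)
  case 0
  then show ?case by (simp add: qfact_def numeral_2_eq_2)
next
  case (Suc n)
  have "Suc n choose 2 = (n choose 2) + n"
    using choose_two_add[of n 1] by simp
  then have "q ^ (Suc n choose 2) * qfact q (Suc n)
      = (q ^ (n choose 2) * qfact q n) * (q ^ n * qint q (Suc n))"
    by (simp add: qfact_Suc power_add mult_ac)
  then show ?case
    using Suc.IH qint_gauss_int[OF assms, of "Suc n"] by (simp add: gauss_fact_Suc)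
qed

lemma qbinom_gauss_binomial:
  assumes "q \<noteq> 0" and "q ^ 2 \<noteq> 1" and "qfact q m \<noteq> 0" and "r \<le> m"
  shows "qbinom q m r * q ^ (r * (m - r)) = gauss_binomial (q ^ 2) m r"
proof -
  obtain d where m: "m = r + d" using \<open>r \<le> m\<close> le_Suc_ex by blast
  have "qfact q r \<noteq> 0" "qfact q d \<noteq> 0"
    using \<open>qfact q m \<noteq> 0\<close> unfolding m qfact_def by auto
  have "gauss_binomial (q ^ 2) m r * (q ^ (r choose 2) * qfact q r) * (q ^ (d choose 2) * qfact q d)
      = q ^ (m choose 2) * qfact q m"
    using gauss_binomial_gauss_fact[of r m "q ^ 2"] m by (simp add: qfact_gauss_fact[OF assms(1,2)])
  then have "gauss_binomial (q ^ 2) m r * qfact q r * qfact q d = q ^ (r * d) * qfact q m"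
    using \<open>q \<noteq> 0\<close> by (simp add: m choose_two_add power_add algebra_simps)
  then show ?thesis
    using \<open>qfact q r \<noteq> 0\<close> \<open>qfact q d \<noteq> 0\<close> m by (simp add: qbinom_def field_simps)
qed

lemma prod_geometric_head:
  fixes q x w :: "'a::comm_ring_1"
  assumes "m \<ge> 1"
  shows "(\<Prod>k\<in>{1..r}. w - q ^ (m - 1) * (x * (q ^ 2) ^ k))
       = (\<Prod>j<r. w - q ^ (m + 1) * x * (q ^ 2) ^ j)"
proof -
  have "q ^ (m - 1) * (q ^ 2) ^ Suc j = q ^ (m + 1) * (q ^ 2) ^ j" for j
    using assms by (cases m) (simp_all add: power2_eq_square mult_ac)
  then show ?thesis
    using prod.atLeast1_atMost_eq[of "\<lambda>k. w - q ^ (m - 1) * (x * (q ^ 2) ^ k)" r]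
    by (simp add: mult_ac del: power_Suc)
qed

lemma prod_geometric_tail:
  fixes q x w :: "'a::idom"
  assumes "r \<le> m" and "q \<noteq> 0"
  shows "(\<Prod>k\<in>{r+1..m}. x * (q ^ 2) ^ k - q ^ (m - 1) * w)
       = q ^ (r * (m - r)) * (\<Prod>j<m - r. q ^ (m + 1) * x - w * (q ^ 2) ^ j)"
proof -
  obtain d where m: "m = r + d" using assms(1) le_Suc_ex by blast
  \<comment> \<open>multiplying every factor by q ^ (m + 1) makes all exponents nonnegative\<close>
  have factor: "q ^ (m + 1) * (x * (q ^ 2) ^ k - q ^ (m - 1) * w)
      = q ^ (2 * k) * (q ^ (m + 1) * x - w * (q ^ 2) ^ (m - k))" if "k \<in> {r+1..m}" for k
  proof -
    have "(m + 1) + (m - 1) = 2 * k + 2 * (m - k)" using that by auto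
    then have "q ^ (m + 1) * q ^ (m - 1) = q ^ (2 * k) * (q ^ 2) ^ (m - k)"
      by (metis power_add power_mult)
    moreover have "(q ^ 2) ^ k = q ^ (2 * k)" by (simp add: power_mult)
    ultimately show ?thesis by (simp add: algebra_simps)
  qed
  have sum_double: "(\<Sum>k\<in>{r+1..r+d}. 2 * k) = (m + 1) * d + r * d"
    unfolding m by (induction d) (simp_all add: atLeastAtMostSuc_conv algebra_simps)
  have "q ^ ((m + 1) * d) = (\<Prod>k\<in>{r+1..m}. q ^ (m + 1))"
    by (simp only: power_mult prod_constant card_atLeastAtMost) (simp add: m)
  then have "q ^ ((m + 1) * d) * (\<Prod>k\<in>{r+1..m}. x * (q ^ 2) ^ k - q ^ (m - 1) * w)
      = (\<Prod>k\<in>{r+1..m}. q ^ (m + 1) * (x * (q ^ 2) ^ k - q ^ (m - 1) * w))"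
    by (simp only: prod.distrib)
  also have "\<dots> = (\<Prod>k\<in>{r+1..m}. q ^ (2 * k) * (q ^ (m + 1) * x - w * (q ^ 2) ^ (m - k)))"
    by (intro prod.cong refl factor)
  also have "\<dots> = q ^ (\<Sum>k\<in>{r+1..m}. 2 * k) * (\<Prod>k\<in>{r+1..m}. q ^ (m + 1) * x - w * (q ^ 2) ^ (m - k))"
    by (simp add: prod.distrib power_sum)
  also have "(\<Prod>k\<in>{r+1..m}. q ^ (m + 1) * x - w * (q ^ 2) ^ (m - k))
      = (\<Prod>j<d. q ^ (m + 1) * x - w * (q ^ 2) ^ j)"
    by (rule prod.reindex_bij_witness[where i = "\<lambda>j. m - j" and j = "\<lambda>k. m - k"]) (auto simp: m)
  finally show ?thesis
    using sum_double \<open>q \<noteq> 0\<close> by (simp add: m power_add)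
qed

lemma qbinom_sum_geometric_eq_0:
  fixes q w x :: complex
  assumes "m \<ge> 1" and "q \<noteq> 0" and "q ^ 2 \<noteq> 1"
  shows "(\<Sum>r=0..m. qbinom q m r
            * (\<Prod>k\<in>{1..r}. w - q ^ (m - 1) * (x * (q ^ 2) ^ k))
            * (\<Prod>k\<in>{r+1..m}. x * (q ^ 2) ^ k - q ^ (m - 1) * w)) = 0"
proof (cases "qfact q m = 0")
  case True
  \<comment> \<open>q is a root of unity, and every qbinom q m r degenerates to 0 / _ = 0\<close>
  then show ?thesis by (simp add: qbinom_def)
next
  case False
  define y where "y = q ^ (m + 1) * x"
  have "qbinom q m r
          * (\<Prod>k\<in>{1..r}. w - q ^ (m - 1) * (x * (q ^ 2) ^ k))
          * (\<Prod>k\<in>{r+1..m}. x * (q ^ 2) ^ k - q ^ (m - 1) * w)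
      = gauss_binomial (q ^ 2) m r * (\<Prod>j<r. w - y * (q ^ 2) ^ j) * (\<Prod>j<m - r. y - w * (q ^ 2) ^ j)"
    if "r \<le> m" for r
    unfolding prod_geometric_head[OF assms(1)] prod_geometric_tail[OF that assms(2)] y_def
      qbinom_gauss_binomial[OF assms(2,3) False that, symmetric]
    by (simp add: mult_ac)
  then have "(\<Sum>r=0..m. qbinom q m r
            * (\<Prod>k\<in>{1..r}. w - q ^ (m - 1) * (x * (q ^ 2) ^ k))
            * (\<Prod>k\<in>{r+1..m}. x * (q ^ 2) ^ k - q ^ (m - 1) * w))
      = (\<Sum>r\<le>m. gauss_binomial (q ^ 2) m r * (\<Prod>j<r. w - y * (q ^ 2) ^ j)
            * (\<Prod>j<m - r. y - w * (q ^ 2) ^ j))"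
    by (simp add: atLeast0AtMost)
  also have "\<dots> = (\<Prod>j<m. y - y * (q ^ 2) ^ j)"
    by (rule gauss_binomial_sum_prod)
  also have "\<dots> = 0"
    using assms(1) by (auto intro: prod_zero bexI[of _ 0])
  finally show ?thesis .
qed

theorem mainTheorem8:
  fixes m :: nat and q w :: complex and z :: "nat \<Rightarrow> complex"
  assumes "m \<ge> 1"
    and "q \<noteq> 0" and "q ^ 2 \<noteq> 1"
    and "inj_on z {1..m}"
  shows "(\<Sum>\<sigma>\<in>{\<sigma>. \<sigma> permutes {1..m}}. \<Sum>r=0..m.
            qbinom q m r
          * (\<Prod>k\<in>{1..r}. (w - q ^ (m - 1) * z (\<sigma> k)))
          * (\<Prod>k\<in>{r+1..m}. (z (\<sigma> k) - q ^ (m - 1) * w))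
          * (\<Prod>(i, j)\<in>{(i, j). 1 \<le> i \<and> i < j \<and> j \<le> m}.
               (z (\<sigma> i) - q ^ 2 * z (\<sigma> j)) / (z (\<sigma> i) - z (\<sigma> j)))) = 0"
proof -
  define \<Phi> where "\<Phi> y = (\<Sum>r=0..m. qbinom q m r
      * (\<Prod>k\<in>{1..r}. w - q ^ (m - 1) * y k) * (\<Prod>k\<in>{r+1..m}. y k - q ^ (m - 1) * w))" for y
  have "?thesis \<longleftrightarrow> hl_symmetrize m (q ^ 2) z \<Phi> = 0"
    unfolding hl_symmetrize_def hl_weight_def \<Phi>_def by (simp add: sum_distrib_right)
  moreover have "hl_symmetrize m (q ^ 2) z \<Phi> = 0"
  proof (rule hl_symmetrize_multilinear_eq_0)
    show "q ^ 2 \<noteq> 0"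
      using assms(2) by simp
    show "multilinear_polyfun {1..m} \<Phi>"
      unfolding \<Phi>_def by (rule multilinear_polyfun_split_prod)
    show "\<Phi> (\<lambda>k. x * (q ^ 2) ^ k) = 0" for x
      using qbinom_sum_geometric_eq_0[OF assms(1-3)] by (simp add: \<Phi>_def)
  qed
  ultimately show ?thesis by blast
qed

end
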